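(* Let $p_1, \dots, p_N \in \mathbb{R}$. For each $j$, let $C^j$ be the elementary symmetric filter with $c^j(-1) = c^j(1) = 1$, $c^j(0) = p_j$, and $c^j(t) = 0$ for $|t| > 1$. Let $C_N = C^1 * C^2 * \cdots * C^N$. Then $C_N$ is invertible if and only if each $C^j$, $j = 1, \dots, N$, is invertible.
   Context: Sequences are indexed by $\mathbb{Z}$. The convolution of sequences $A, B$ is $(A * B)(t) = \sum_{k} a(k) b(t-k)$. The unit sequence $I$ is defined by $I(0) = 1$ and $I(t) = 0$ for $t \neq 0$. A finite filter $C$ is called invertible if there exists a sequence $Z = (z(t))_{t\in\mathbb{Z}}$ with $C * Z = I$ such that $Z$ is summable, i.e. $\sum_t |z(t)| < \infty$, and its entries converge to $0$ exponentially fast, i.e. $|z(t)| \le K r^{|t|}$ for some constants $K > 0$ and $0 < r < 1$. *)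

theory Defs
  imports "HOL-Analysis.Analysis"
begin

type_synonym zseq = "int \<Rightarrow> real"

definition conv :: "zseq \<Rightarrow> zseq \<Rightarrow> zseq" where
  "conv A B = (\<lambda>t. \<Sum>\<^sub>\<infinity>k\<in>(UNIV::int set). A k * B (t - k))"

definition unit_seq :: zseq where
  "unit_seq = (\<lambda>t. if t = 0 then 1 else 0)"

definition finite_filter :: "zseq \<Rightarrow> bool" where
  "finite_filter C \<longleftrightarrow> finite {t. C t \<noteq> 0}"

definition invertible_filter :: "zseq \<Rightarrow> bool" where
  "invertible_filter C \<longleftrightarrow> finite_filter C \<and>
     (\<exists>Z. conv C Z = unit_seq \<and>
          (\<lambda>t. \<bar>Z t\<bar>) summable_on (UNIV::int set) \<and>
          (\<exists>K r. K > 0 \<and> 0 < r \<and> r < 1 \<and> (\<forall>t. \<bar>Z t\<bar> \<le> K * r ^ nat \<bar>t\<bar>)))"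

definition elem_filter :: "real \<Rightarrow> zseq" where
  "elem_filter p = (\<lambda>t. if t = 0 then p else if \<bar>t\<bar> = 1 then 1 else 0)"

fun conv_prod :: "(nat \<Rightarrow> zseq) \<Rightarrow> nat \<Rightarrow> zseq" where
  "conv_prod C 0 = unit_seq"
| "conv_prod C (Suc n) = conv (conv_prod C n) (C (Suc n))"

end

theory Submission
  imports Defs
begin

text \<open>Convolution is commutative, and associative as soon as two factors are absolutely
  summable and the third is bounded; so finite filters and exponentially decaying sequences
  can be manipulated as in a commutative algebra. Hence if \<open>A\<close> and \<open>B\<close> have inverses \<open>Z\<^sub>A\<close> and \<open>Z\<^sub>B\<close>, then \<open>Z\<^sub>A * Z\<^sub>B\<close> inverts
  \<open>A * B\<close>; conversely, if \<open>W\<close> inverts \<open>A * B\<close>, then \<open>B * W\<close> inverts \<open>A\<close>, and it decays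
  exponentially because \<open>B\<close> is finite. Induction over the number of factors gives the
  theorem for arbitrary finite filters.\<close>

lemma conv_commute: "conv A B = conv B A"
proof
  fix t
  show "conv A B t = conv B A t"
    unfolding conv_def
    by (rule infsum_reindex_bij_witness[where i="\<lambda>k. t - k" and j="\<lambda>k. t - k"]) (auto simp: mult.commute)
qed

lemma conv_unit_left: "conv unit_seq X = X"
proof
  fix t
  have "conv unit_seq X t = (\<Sum>\<^sub>\<infinity>k\<in>{0}. unit_seq k * X (t - k))"
    unfolding conv_def by (rule infsum_cong_neutral) (auto simp: unit_seq_def)
  then show "conv unit_seq X t = X t"
    by (simp add: unit_seq_def)
qed

lemma abs_le_infsum_abs:
  fixes A :: "'a \<Rightarrow> real"
  assumes "(\<lambda>t. \<bar>A t\<bar>) summable_on UNIV"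
  shows "\<bar>A t\<bar> \<le> (\<Sum>\<^sub>\<infinity>s. \<bar>A s\<bar>)"
proof -
  have "(\<Sum>\<^sub>\<infinity>s\<in>{t}. \<bar>A s\<bar>) \<le> (\<Sum>\<^sub>\<infinity>s. \<bar>A s\<bar>)"
    by (rule infsum_mono_neutral) (use assms in auto)
  then show ?thesis
    by simp
qed

lemma conv_kernel_abs_summable:
  fixes A B :: zseq
  assumes A: "(\<lambda>t. \<bar>A t\<bar>) summable_on UNIV" and B: "(\<lambda>t. \<bar>B t\<bar>) summable_on UNIV"
  shows "(\<lambda>(j, k). \<bar>A k\<bar> * \<bar>B (j - k)\<bar>) summable_on UNIV"
proof -
  let ?S = "\<Sum>\<^sub>\<infinity>m. \<bar>B m\<bar>"
  have product: "(\<lambda>(k, m). \<bar>A k\<bar> * \<bar>B m\<bar>) summable_on UNIV \<times> UNIV"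
  proof (rule summable_on_SigmaI[where g="\<lambda>k. \<bar>A k\<bar> * ?S"])
    show "((\<lambda>m. case (k, m) of (k, m) \<Rightarrow> \<bar>A k\<bar> * \<bar>B m\<bar>) has_sum \<bar>A k\<bar> * ?S) UNIV" for k
      using has_sum_cmult_right[OF has_sum_infsum[OF B], of "\<bar>A k\<bar>"] by simp
    show "(\<lambda>k. \<bar>A k\<bar> * ?S) summable_on UNIV"
      using summable_on_cmult_left[OF A] by simp
  qed auto
  have "bij_betw (\<lambda>(j, k). (k, j - k)) (UNIV :: (int \<times> int) set) UNIV"
    by (rule bij_betwI[where g="\<lambda>(k, m). (k + m, k)"]) auto
  from summable_on_reindex_bij_betw[OF this, of "\<lambda>(k, m). \<bar>A k\<bar> * \<bar>B m\<bar>"] product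
  show ?thesis
    by (simp add: case_prod_unfold)
qed

lemma conv_assoc:
  fixes A B W :: zseq
  assumes A: "(\<lambda>t. \<bar>A t\<bar>) summable_on UNIV" and B: "(\<lambda>t. \<bar>B t\<bar>) summable_on UNIV"
    and W: "\<And>t. \<bar>W t\<bar> \<le> M"
  shows "conv (conv A B) W = conv A (conv B W)"
proof
  fix t
  define G where "G = (\<lambda>j k. A k * B (j - k) * W (t - j))"
  have "(\<lambda>(j, k). \<bar>G j k\<bar>) summable_on UNIV"
  proof (rule summable_on_comparison_test)
    show "(\<lambda>x. M * (case x of (j, k) \<Rightarrow> \<bar>A k\<bar> * \<bar>B (j - k)\<bar>)) summable_on UNIV"
      using summable_on_cmult_right[OF conv_kernel_abs_summable[OF A B]] .
    show "(case x of (j, k) \<Rightarrow> \<bar>G j k\<bar>) \<le> M * (case x of (j, k) \<Rightarrow> \<bar>A k\<bar> * \<bar>B (j - k)\<bar>)" for x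
      using mult_left_mono[OF W[of "t - fst x"], of "\<bar>A (snd x)\<bar> * \<bar>B (fst x - snd x)\<bar>"]
      by (auto simp: G_def abs_mult mult_ac case_prod_unfold)
  qed auto
  then have G: "(\<lambda>(j, k). G j k) summable_on UNIV \<times> UNIV"
    using summable_on_iff_abs_summable_on_real[of "\<lambda>(j, k). G j k" UNIV]
    by (simp add: case_prod_unfold)
  have shift: "(\<Sum>\<^sub>\<infinity>j. B (j - k) * W (t - j)) = conv B W (t - k)" for k
    unfolding conv_def
    by (rule infsum_reindex_bij_witness[where i="\<lambda>m. m + k" and j="\<lambda>j. j - k"]) auto
  have "conv (conv A B) W t = (\<Sum>\<^sub>\<infinity>j. \<Sum>\<^sub>\<infinity>k. G j k)"
    by (simp add: conv_def G_def infsum_cmult_left')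
  also have "\<dots> = (\<Sum>\<^sub>\<infinity>k. \<Sum>\<^sub>\<infinity>j. G j k)"
    by (rule infsum_swap_banach[OF G])
  also have "\<dots> = (\<Sum>\<^sub>\<infinity>k. A k * (\<Sum>\<^sub>\<infinity>j. B (j - k) * W (t - j)))"
    by (simp add: G_def infsum_cmult_right'[symmetric] mult.assoc)
  also have "\<dots> = conv A (conv B W) t"
    by (simp add: conv_def shift)
  finally show "conv (conv A B) W t = conv A (conv B W) t" .
qed

text \<open>For \<open>\<rho> > 1\<close> this is equivalent to exponential decay of \<open>A\<close>, in a form that is easy
  to propagate through convolutions.\<close>

definition exp_summable :: "real \<Rightarrow> zseq \<Rightarrow> bool" where
  "exp_summable \<rho> A \<longleftrightarrow> (\<lambda>t. \<bar>A t\<bar> * \<rho> ^ nat \<bar>t\<bar>) summable_on UNIV"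

lemma exp_summable_one: "exp_summable 1 A \<longleftrightarrow> (\<lambda>t. \<bar>A t\<bar>) summable_on UNIV"
  by (simp add: exp_summable_def)

lemma exp_summable_mono:
  assumes "0 \<le> \<rho>'" "\<rho>' \<le> \<rho>" "exp_summable \<rho> A"
  shows "exp_summable \<rho>' A"
  unfolding exp_summable_def
proof (rule summable_on_comparison_test[OF assms(3)[unfolded exp_summable_def]])
  show "\<bar>A t\<bar> * \<rho>' ^ nat \<bar>t\<bar> \<le> \<bar>A t\<bar> * \<rho> ^ nat \<bar>t\<bar>" for t
    by (rule mult_left_mono[OF power_mono]) (use assms in auto)
qed (use assms in auto)

lemma exp_summable_imp_abs_summable:
  assumes "1 \<le> \<rho>" "exp_summable \<rho> A"
  shows "(\<lambda>t. \<bar>A t\<bar>) summable_on UNIV"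
  using exp_summable_mono[OF _ assms] by (simp add: exp_summable_one)

lemma conv_assoc_exp_summable:
  assumes "1 \<le> \<rho>" "exp_summable \<rho> A" "exp_summable \<rho> B" "exp_summable \<rho> W"
  shows "conv (conv A B) W = conv A (conv B W)"
  using assms
  by (intro conv_assoc[where M="\<Sum>\<^sub>\<infinity>s. \<bar>W s\<bar>"] abs_le_infsum_abs exp_summable_imp_abs_summable)

lemma finite_filter_exp_summable:
  assumes "finite_filter A"
  shows "exp_summable \<rho> A"
proof -
  have "(\<lambda>t. \<bar>A t\<bar> * \<rho> ^ nat \<bar>t\<bar>) summable_on {t. A t \<noteq> 0}"
    using assms by (simp add: finite_filter_def)
  also have "?this \<longleftrightarrow> (\<lambda>t. \<bar>A t\<bar> * \<rho> ^ nat \<bar>t\<bar>) summable_on UNIV"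
    by (rule summable_on_cong_neutral) auto
  finally show ?thesis
    unfolding exp_summable_def .
qed

lemma exp_summable_conv:
  assumes "1 \<le> \<rho>" and A: "exp_summable \<rho> A" and B: "exp_summable \<rho> B"
  shows "exp_summable \<rho> (conv A B)"
proof -
  define A' where "A' = (\<lambda>k. \<bar>A k\<bar> * \<rho> ^ nat \<bar>k\<bar>)"
  define B' where "B' = (\<lambda>k. \<bar>B k\<bar> * \<rho> ^ nat \<bar>k\<bar>)"
  define H where "H = (\<lambda>j k. A' k * B' (j - k))"
  have "(\<lambda>(j, k). \<bar>A' k\<bar> * \<bar>B' (j - k)\<bar>) summable_on UNIV"
    by (rule conv_kernel_abs_summable) (use A B assms(1) in \<open>simp_all add: exp_summable_def A'_def B'_def\<close>)
  then have H: "(\<lambda>(j, k). H j k) summable_on UNIV \<times> UNIV"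
    using assms(1) by (simp add: H_def A'_def B'_def)
  have Hj: "H j summable_on UNIV" for j
    using summable_on_SigmaD1[OF H] by simp
  have Hsum: "(\<lambda>j. \<Sum>\<^sub>\<infinity>k. H j k) summable_on UNIV"
    using summable_on_SigmaD[OF H] Hj by simp
  have weight: "\<bar>A k * B (j - k) * \<rho> ^ nat \<bar>j\<bar>\<bar> \<le> H j k" for j k
  proof -
    have "\<rho> ^ nat \<bar>j\<bar> \<le> \<rho> ^ (nat \<bar>k\<bar> + nat \<bar>j - k\<bar>)"
      by (rule power_increasing) (use assms(1) in auto)
    then have "\<bar>A k * B (j - k)\<bar> * \<rho> ^ nat \<bar>j\<bar> \<le> \<bar>A k * B (j - k)\<bar> * (\<rho> ^ nat \<bar>k\<bar> * \<rho> ^ nat \<bar>j - k\<bar>)"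
      by (simp add: mult_left_mono power_add)
    then show ?thesis
      using assms(1) by (simp add: H_def A'_def B'_def abs_mult mult_ac)
  qed
  show ?thesis
    unfolding exp_summable_def
  proof (rule summable_on_comparison_test[OF Hsum])
    fix j
    have summable: "(\<lambda>k. \<bar>A k * B (j - k) * \<rho> ^ nat \<bar>j\<bar>\<bar>) summable_on UNIV"
      by (rule summable_on_comparison_test[OF Hj]) (use weight in auto)
    then have "\<bar>\<Sum>\<^sub>\<infinity>k. A k * B (j - k) * \<rho> ^ nat \<bar>j\<bar>\<bar> \<le> (\<Sum>\<^sub>\<infinity>k. \<bar>A k * B (j - k) * \<rho> ^ nat \<bar>j\<bar>\<bar>)"
      using norm_infsum_bound[of "\<lambda>k. A k * B (j - k) * \<rho> ^ nat \<bar>j\<bar>" UNIV] by (simp add: real_norm_def)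
    also have "\<dots> \<le> (\<Sum>\<^sub>\<infinity>k. H j k)"
      using summable Hj weight by (intro infsum_mono)
    finally show "\<bar>conv A B j\<bar> * \<rho> ^ nat \<bar>j\<bar> \<le> (\<Sum>\<^sub>\<infinity>k. H j k)"
      using assms(1) by (simp add: conv_def infsum_cmult_left' abs_mult)
  qed (use assms(1) in auto)
qed

lemma exp_summable_imp_exp_decay:
  assumes "1 < \<rho>" "exp_summable \<rho> Z"
  shows "\<exists>K r. K > 0 \<and> 0 < r \<and> r < 1 \<and> (\<forall>t. \<bar>Z t\<bar> \<le> K * r ^ nat \<bar>t\<bar>)"
proof -
  define S where "S = (\<Sum>\<^sub>\<infinity>t. \<bar>Z t * \<rho> ^ nat \<bar>t\<bar>\<bar>)"
  have "\<bar>Z t\<bar> \<le> (S + 1) * (1 / \<rho>) ^ nat \<bar>t\<bar>" for t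
  proof -
    have "\<bar>Z t * \<rho> ^ nat \<bar>t\<bar>\<bar> \<le> S"
      unfolding S_def
      by (rule abs_le_infsum_abs) (use assms in \<open>simp add: exp_summable_def abs_mult\<close>)
    then have "\<bar>Z t\<bar> \<le> S * (1 / \<rho>) ^ nat \<bar>t\<bar>"
      using assms(1) by (simp add: abs_mult power_one_over field_simps)
    also have "\<dots> \<le> (S + 1) * (1 / \<rho>) ^ nat \<bar>t\<bar>"
      using assms(1) by (intro mult_right_mono) auto
    finally show ?thesis .
  qed
  moreover have "S \<ge> 0"
    unfolding S_def by (rule infsum_nonneg) simp
  ultimately show ?thesis
    using assms(1) by (intro exI[of _ "S + 1"] exI[of _ "1 / \<rho>"]) auto
qed

lemma summable_on_power_abs_int:
  fixes q :: real
  assumes "0 \<le> q" "q < 1"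
  shows "(\<lambda>t::int. q ^ nat \<bar>t\<bar>) summable_on UNIV"
proof -
  have geometric: "(\<lambda>n::nat. q ^ n) summable_on UNIV"
    by (rule summable_nonneg_imp_summable_on) (use assms in \<open>auto intro: summable_geometric\<close>)
  have "(\<lambda>t::int. q ^ nat \<bar>t\<bar>) summable_on range int"
    by (subst summable_on_reindex) (use geometric in \<open>auto simp: o_def\<close>)
  moreover have "(\<lambda>t::int. q ^ nat \<bar>t\<bar>) summable_on range (\<lambda>n. - int n)"
    by (subst summable_on_reindex) (use geometric in \<open>auto simp: o_def inj_on_def\<close>)
  moreover have "range int \<union> range (\<lambda>n. - int n) = (UNIV :: int set)"
    by (auto intro: int_cases2)
  ultimately show ?thesis
    by (metis summable_on_union)
qed

lemma exp_decay_imp_exp_summable: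
  assumes "0 < r" "r < 1" "\<And>t. \<bar>Z t\<bar> \<le> K * r ^ nat \<bar>t\<bar>"
  shows "exp_summable (1 / sqrt r) Z"
  unfolding exp_summable_def
proof (rule summable_on_comparison_test)
  show "(\<lambda>t. K * sqrt r ^ nat \<bar>t\<bar>) summable_on UNIV"
    using assms by (intro summable_on_cmult_right summable_on_power_abs_int) auto
  show "\<bar>Z t\<bar> * (1 / sqrt r) ^ nat \<bar>t\<bar> \<le> K * sqrt r ^ nat \<bar>t\<bar>" for t
  proof -
    have "\<bar>Z t\<bar> * (1 / sqrt r) ^ nat \<bar>t\<bar> \<le> K * r ^ nat \<bar>t\<bar> * (1 / sqrt r) ^ nat \<bar>t\<bar>"
      using assms by (intro mult_right_mono) auto
    also have "\<dots> = K * (r / sqrt r) ^ nat \<bar>t\<bar>"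
      by (simp add: power_divide power_one_over)
    also have "r / sqrt r = sqrt r"
      using assms(1) by (metis real_div_sqrt less_eq_real_def)
    finally show ?thesis .
  qed
qed (use assms(1) in auto)

lemma invertible_filter_iff_exp_summable:
  "invertible_filter C \<longleftrightarrow>
     finite_filter C \<and> (\<exists>Z \<rho>. 1 < \<rho> \<and> conv C Z = unit_seq \<and> exp_summable \<rho> Z)"
proof
  assume "invertible_filter C"
  then obtain Z K r where "finite_filter C" "conv C Z = unit_seq"
    and r: "0 < r" "r < 1" and decay: "\<And>t. \<bar>Z t\<bar> \<le> K * r ^ nat \<bar>t\<bar>"
    unfolding invertible_filter_def by blast
  moreover have "1 < 1 / sqrt r"
    using r by simp
  ultimately show "finite_filter C \<and> (\<exists>Z \<rho>. 1 < \<rho> \<and> conv C Z = unit_seq \<and> exp_summable \<rho> Z)"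
    using exp_decay_imp_exp_summable[OF r decay] by blast
next
  assume "finite_filter C \<and> (\<exists>Z \<rho>. 1 < \<rho> \<and> conv C Z = unit_seq \<and> exp_summable \<rho> Z)"
  then obtain Z \<rho> where "finite_filter C" "1 < \<rho>" "conv C Z = unit_seq" "exp_summable \<rho> Z"
    by blast
  then show "invertible_filter C"
    unfolding invertible_filter_def
    using exp_summable_imp_abs_summable[of \<rho> Z] exp_summable_imp_exp_decay[of \<rho> Z] by auto
qed

lemma finite_filter_conv:
  assumes "finite_filter A" "finite_filter B"
  shows "finite_filter (conv A B)"
proof -
  let ?SA = "{t. A t \<noteq> 0}" and ?SB = "{t. B t \<noteq> 0}"
  have "{t. conv A B t \<noteq> 0} \<subseteq> (\<lambda>(a, b). a + b) ` (?SA \<times> ?SB)"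
  proof
    fix t
    assume t: "t \<in> {t. conv A B t \<noteq> 0}"
    then obtain k where "A k * B (t - k) \<noteq> 0"
      unfolding conv_def by (metis (mono_tags) infsum_0 mem_Collect_eq)
    then have "(k, t - k) \<in> ?SA \<times> ?SB"
      by simp
    then show "t \<in> (\<lambda>(a, b). a + b) ` (?SA \<times> ?SB)"
      by (rule rev_image_eqI) simp
  qed
  moreover have "finite ((\<lambda>(a, b). a + b) ` (?SA \<times> ?SB))"
    using assms unfolding finite_filter_def by simp
  ultimately show ?thesis
    unfolding finite_filter_def by (rule finite_subset)
qed

lemma finite_filter_unit_seq: "finite_filter unit_seq"
proof -
  have "{t. unit_seq t \<noteq> 0} \<subseteq> {0}"
    by (auto simp: unit_seq_def)
  then show ?thesis
    unfolding finite_filter_def by (rule finite_subset) simp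
qed

lemma finite_filter_elem_filter: "finite_filter (elem_filter p)"
proof -
  have "{t. elem_filter p t \<noteq> 0} \<subseteq> {-1, 0, 1}"
    by (auto simp: elem_filter_def abs_if split: if_splits)
  then show ?thesis
    unfolding finite_filter_def by (rule finite_subset) simp
qed

lemma finite_filter_conv_prod:
  assumes "\<And>j. finite_filter (C j)"
  shows "finite_filter (conv_prod C N)"
  by (induction N) (simp_all add: assms finite_filter_conv finite_filter_unit_seq)

lemma invertible_filter_unit_seq: "invertible_filter unit_seq"
  unfolding invertible_filter_iff_exp_summable
  using finite_filter_unit_seq finite_filter_exp_summable[OF finite_filter_unit_seq, of 2]
  by (auto simp: conv_unit_left intro: exI[of _ 2])

lemma invertible_filter_conv:
  assumes "invertible_filter A" "invertible_filter B"
  shows "invertible_filter (conv A B)"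
proof -
  obtain ZA \<rho>A where A: "finite_filter A" "1 < \<rho>A" "conv A ZA = unit_seq" "exp_summable \<rho>A ZA"
    using assms(1) unfolding invertible_filter_iff_exp_summable by blast
  obtain ZB \<rho>B where B: "finite_filter B" "1 < \<rho>B" "conv B ZB = unit_seq" "exp_summable \<rho>B ZB"
    using assms(2) unfolding invertible_filter_iff_exp_summable by blast
  define \<rho> where "\<rho> = min \<rho>A \<rho>B"
  have \<rho>: "1 < \<rho>"
    using A B by (simp add: \<rho>_def)
  have ZA: "exp_summable \<rho> ZA"
    by (rule exp_summable_mono[OF _ _ A(4)]) (use \<rho> in \<open>auto simp: \<rho>_def\<close>)
  have ZB: "exp_summable \<rho> ZB"
    by (rule exp_summable_mono[OF _ _ B(4)]) (use \<rho> in \<open>auto simp: \<rho>_def\<close>)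
  have fin: "exp_summable \<rho> A" "exp_summable \<rho> B"
    using A(1) B(1) by (simp_all add: finite_filter_exp_summable)
  have W: "exp_summable \<rho> (conv ZB ZA)"
    using exp_summable_conv[OF _ ZB ZA] \<rho> by simp
  have "conv (conv A B) (conv ZB ZA) = conv A (conv B (conv ZB ZA))"
    using \<rho> fin W by (intro conv_assoc_exp_summable) auto
  also have "conv B (conv ZB ZA) = conv (conv B ZB) ZA"
    using \<rho> fin ZA ZB by (intro conv_assoc_exp_summable[symmetric]) auto
  also have "\<dots> = ZA"
    by (simp add: B(3) conv_unit_left)
  finally have "conv (conv A B) (conv ZB ZA) = unit_seq"
    using A(3) by simp
  then show ?thesis
    unfolding invertible_filter_iff_exp_summable
    using A(1) B(1) finite_filter_conv \<rho> W by blast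
qed

lemma invertible_filter_conv_left:
  assumes A: "finite_filter A" and B: "finite_filter B" and AB: "invertible_filter (conv A B)"
  shows "invertible_filter A"
proof -
  obtain W \<rho> where \<rho>: "1 < \<rho>" and W: "conv (conv A B) W = unit_seq" "exp_summable \<rho> W"
    using AB unfolding invertible_filter_iff_exp_summable by blast
  have "conv A (conv B W) = unit_seq"
    using conv_assoc_exp_summable[of \<rho> A B W] \<rho> W by (simp add: A B finite_filter_exp_summable)
  moreover have "exp_summable \<rho> (conv B W)"
    using exp_summable_conv[OF _ finite_filter_exp_summable[OF B] W(2)] \<rho> by simp
  ultimately show ?thesis
    unfolding invertible_filter_iff_exp_summable using A \<rho> by blast
qed

lemma invertible_filter_conv_iff:
  assumes "finite_filter A" "finite_filter B"
  shows "invertible_filter (conv A B) \<longleftrightarrow> invertible_filter A \<and> invertible_filter B"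
  using invertible_filter_conv invertible_filter_conv_left[OF assms]
    invertible_filter_conv_left[OF assms(2,1)] conv_commute[of A B]
  by metis

lemma invertible_filter_conv_prod_iff:
  assumes "\<And>j. finite_filter (C j)"
  shows "invertible_filter (conv_prod C N) \<longleftrightarrow> (\<forall>j\<in>{1..N}. invertible_filter (C j))"
proof (induction N)
  case 0
  show ?case
    by (simp add: invertible_filter_unit_seq)
next
  case (Suc N)
  have "invertible_filter (conv_prod C (Suc N)) \<longleftrightarrow>
      invertible_filter (conv_prod C N) \<and> invertible_filter (C (Suc N))"
    by (simp add: invertible_filter_conv_iff finite_filter_conv_prod assms)
  also have "\<dots> \<longleftrightarrow> (\<forall>j\<in>{1..Suc N}. invertible_filter (C j))"
    using Suc.IH by (auto simp: atLeastAtMostSuc_conv)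
  finally show ?case .
qed

theorem mainTheorem2:
  fixes p :: "nat \<Rightarrow> real" and N :: nat
  shows "invertible_filter (conv_prod (\<lambda>j. elem_filter (p j)) N) \<longleftrightarrow>
         (\<forall>j\<in>{1..N}. invertible_filter (elem_filter (p j)))"
  by (rule invertible_filter_conv_prod_iff) (rule finite_filter_elem_filter)

end
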